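(* Let $r\geqslant 3$ be an odd integer and let $\Gamma\cong\mathbb{Z}_{4r}\oplus\mathbb{Z}_4$. Then there exists an $\mathrm{MRS}_\Gamma(r,8;2)$ in which every row sum and every column sum equals $0_\Gamma$.
   Context: For an abelian group $\Gamma$ of order $abc$, an $\mathrm{MRS}_\Gamma(a,b;c)$ is a collection of $c$ arrays of size $a\times b$ whose entries are the elements of $\Gamma$, each appearing exactly once and in a unique array, such that there are $\omega,\delta\in\Gamma$ with every row sum (in every array) equal to $\omega$ and every column sum (in every array) equal to $\delta$. *)

theory Defs
  imports "HOL-Algebra.Algebra"
begin

text \<open>An abelian group is written multiplicatively in HOL-Algebra, so the group
  operation plays the role of the sum and the unit plays the role of 0.
  An MRS_G(a,b;c) is a family of c arrays of size a x b, encoded as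
  A k i j (array k < c, row i < a, column j < b), whose entries run bijectively
  over the elements of G, with all row sums equal to w and all column sums equal to d.\<close>

definition is_MRS ::
  "('g, 'm) monoid_scheme \<Rightarrow> nat \<Rightarrow> nat \<Rightarrow> nat \<Rightarrow> (nat \<Rightarrow> nat \<Rightarrow> nat \<Rightarrow> 'g) \<Rightarrow> 'g \<Rightarrow> 'g \<Rightarrow> bool"
where
  "is_MRS G a b c A w d \<longleftrightarrow>
     finite (carrier G) \<and> card (carrier G) = a * b * c \<and>
     bij_betw (\<lambda>(k, i, j). A k i j) ({..<c} \<times> {..<a} \<times> {..<b}) (carrier G) \<and>
     w \<in> carrier G \<and> d \<in> carrier G \<and>
     (\<forall>k<c. \<forall>i<a. finprod G (\<lambda>j. A k i j) {..<b} = w) \<and>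
     (\<forall>k<c. \<forall>j<b. finprod G (\<lambda>i. A k i j) {..<a} = d)"

end

theory Submission
  imports Defs "HOL-Library.Product_Plus"
begin

text \<open>
  Write an element of \<open>\<Gamma> = \<int>\<^sub>4\<^sub>r \<times> \<int>\<^sub>4\<close> as \<open>(a + r b, y)\<close> with integer coordinates
  \<open>(a, b, y)\<close>. If \<open>|a| < r/2\<close>, the element determines \<open>a\<close> exactly and \<open>b, y\<close> modulo 4, so
  \<open>\<Gamma>\<close> is partitioned by the value of \<open>a\<close>.
  In both arrays the first three rows are an explicit table of the 48 elements with
  \<open>a \<in> {-1, 0, 1}\<close>. For \<open>2 \<le> p \<le> (r - 1)/2\<close> the rows \<open>2p - 1\<close> and \<open>2p\<close> take the 32 elements
  with \<open>a = \<plusminus>p\<close>, row \<open>2p\<close> being the negative of row \<open>2p - 1\<close>. These pairs cancel in every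
  column, so the column sums are those of the table. In every row the \<open>a\<close>-coordinates cancel
  and the \<open>b\<close>- and \<open>y\<close>-coordinates add up to multiples of 4, so every row sum is 0.
  An isomorphism then carries the arrays over to any group isomorphic to \<open>\<Gamma>\<close>.
\<close>

lemma comm_monoid_DirProd:
  assumes "comm_monoid G" "comm_monoid H"
  shows "comm_monoid (G \<times>\<times> H)"
proof (rule comm_monoid.intro)
  show "monoid (G \<times>\<times> H)"
    using assms by (intro DirProd_monoid) (simp_all add: comm_monoid_def)
  show "comm_monoid_axioms (G \<times>\<times> H)"
    using assms by (auto simp: comm_monoid_axioms_def comm_monoid.m_comm)
qed

lemma finprod_DirProd:
  assumes "comm_monoid G" "comm_monoid H"
    and "f \<in> S \<rightarrow> carrier G" "g \<in> S \<rightarrow> carrier H"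
  shows "finprod (G \<times>\<times> H) (\<lambda>i. (f i, g i)) S = (finprod G f S, finprod H g S)"
proof -
  interpret G: comm_monoid G by fact
  interpret H: comm_monoid H by fact
  interpret GH: comm_monoid "G \<times>\<times> H" using comm_monoid_DirProd assms(1,2) .
  show ?thesis
  proof (cases "finite S")
    case True
    from this assms(3,4) show ?thesis
      by (induction S rule: finite_induct) (auto simp: Pi_iff)
  qed simp
qed

lemma finprod_integer_mod_group:
  "finprod (integer_mod_group n) (\<lambda>i. f i mod int n) S = (\<Sum>i\<in>S. f i) mod int n"
proof -
  interpret Z: comm_group "integer_mod_group n" by simp
  show ?thesis
  proof (cases "finite S")
    case True
    then show ?thesis
    proof (induction S rule: finite_induct)
      case (insert x S)
      have "(\<lambda>i. f i mod int n) \<in> S \<rightarrow> carrier (integer_mod_group n)"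
        by (auto simp: carrier_integer_mod_group)
      with insert show ?case
        by (simp add: carrier_integer_mod_group mod_add_eq)
    qed simp
  qed simp
qed

lemma hom_finprod:
  assumes "comm_group G" "comm_group H" "h \<in> hom G H" "f \<in> S \<rightarrow> carrier G"
  shows "h (finprod G f S) = finprod H (\<lambda>i. h (f i)) S"
proof -
  interpret G: comm_group G by fact
  interpret H: comm_group H by fact
  have h_one: "h \<one>\<^bsub>G\<^esub> = \<one>\<^bsub>H\<^esub>"
    using assms by (simp add: hom_one comm_group.axioms(2))
  show ?thesis
  proof (cases "finite S")
    case True
    from this assms(4) show ?thesis
    proof (induction S rule: finite_induct)
      case (insert x S)
      then have "h ` f ` S \<subseteq> carrier H" "h (f x) \<in> carrier H"
        using assms(3) by (auto simp: hom_def)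
      with insert assms(3) show ?case
        by (simp add: Pi_iff image_subset_iff hom_mult)
    qed (simp add: h_one)
  qed (simp add: h_one)
qed

lemma is_MRS_iso:
  assumes "comm_group P" "comm_group G" "h \<in> iso P G"
    and "is_MRS P a b c A w d"
  shows "is_MRS G a b c (\<lambda>k i j. h (A k i j)) (h w) (h d)"
proof -
  have hom: "h \<in> hom P G" and bij: "bij_betw h (carrier P) (carrier G)"
    using assms(3) by (auto simp: iso_def)
  have A: "bij_betw (\<lambda>(k, i, j). A k i j) ({..<c} \<times> {..<a} \<times> {..<b}) (carrier P)"
    using assms(4) by (simp add: is_MRS_def)
  then have A_carrier: "A k i j \<in> carrier P" if "k < c" "i < a" "j < b" for k i j
    using that bij_betwE by fastforce
  have "bij_betw (h \<circ> (\<lambda>(k, i, j). A k i j)) ({..<c} \<times> {..<a} \<times> {..<b}) (carrier G)"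
    using A bij by (rule bij_betw_trans)
  moreover have "h \<circ> (\<lambda>(k, i, j). A k i j) = (\<lambda>(k, i, j). h (A k i j))"
    by auto
  moreover have "finprod G (\<lambda>j. h (A k i j)) {..<b} = h w" if "k < c" "i < a" for k i
    using assms(4) that A_carrier
    by (simp add: is_MRS_def hom_finprod[OF assms(1,2) hom, symmetric] Pi_iff)
  moreover have "finprod G (\<lambda>i. h (A k i j)) {..<a} = h d" if "k < c" "j < b" for k j
    using assms(4) that A_carrier
    by (simp add: is_MRS_def hom_finprod[OF assms(1,2) hom, symmetric] Pi_iff)
  ultimately show ?thesis
    using assms(4) bij hom
    by (auto simp: is_MRS_def bij_betw_finite bij_betw_same_card[symmetric] hom_def)
qed

lemma sum_lessThan_cancel_pairs:
  fixes f :: "nat \<Rightarrow> 'a::comm_monoid_add"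
  assumes "\<And>t. f (n + 2 * t) + f (n + 2 * t + 1) = 0"
  shows "(\<Sum>i<n + 2 * m. f i) = (\<Sum>i<n. f i)"
proof (induction m)
  case (Suc m)
  have "(\<Sum>i<n + 2 * Suc m. f i) = (\<Sum>i<n + 2 * m. f i) + (f (n + 2 * m) + f (n + 2 * m + 1))"
    by (simp add: add.assoc)
  with Suc assms show ?case
    by simp
qed simp

abbreviation Gamma :: "nat \<Rightarrow> (int \<times> int) monoid" where
  "Gamma r \<equiv> integer_mod_group (4 * r) \<times>\<times> integer_mod_group 4"

lemma comm_group_Gamma: "comm_group (Gamma r)"
proof -
  have "comm_monoid (integer_mod_group n)" for n
    using abelian_integer_mod_group by (simp add: comm_group_def)
  then show ?thesis
    by (simp add: comm_group_def DirProd_group comm_monoid_DirProd)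
qed

definition elem_of_coords :: "nat \<Rightarrow> int \<times> int \<times> int \<Rightarrow> int \<times> int" where
  "elem_of_coords r = (\<lambda>(a, b, y). ((a + int r * b) mod (4 * int r), y mod 4))"

lemma elem_of_coords_in_carrier: "elem_of_coords r v \<in> carrier (Gamma r)"
  by (simp add: elem_of_coords_def carrier_integer_mod_group split: prod.splits)

lemma finprod_elem_of_coords:
  "finprod (Gamma r) (\<lambda>i. elem_of_coords r (f i)) S = elem_of_coords r (\<Sum>i\<in>S. f i)"
proof -
  let ?x = "\<lambda>i. fst (f i) + int r * fst (snd (f i))" and ?y = "\<lambda>i. snd (snd (f i))"
  have "finprod (Gamma r) (\<lambda>i. elem_of_coords r (f i)) S
      = finprod (Gamma r) (\<lambda>i. (?x i mod int (4 * r), ?y i mod int 4)) S"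
    by (simp add: elem_of_coords_def case_prod_unfold)
  also have "\<dots> = (finprod (integer_mod_group (4 * r)) (\<lambda>i. ?x i mod int (4 * r)) S,
                      finprod (integer_mod_group 4) (\<lambda>i. ?y i mod int 4) S)"
    by (rule finprod_DirProd)
      (simp_all add: comm_group.axioms(1) carrier_integer_mod_group)
  also have "\<dots> = ((\<Sum>i\<in>S. ?x i) mod int (4 * r), (\<Sum>i\<in>S. ?y i) mod int 4)"
    by (simp only: finprod_integer_mod_group)
  also have "\<dots> = elem_of_coords r (\<Sum>i\<in>S. f i)"
    by (simp add: elem_of_coords_def case_prod_unfold fst_sum snd_sum sum.distrib sum_distrib_left)
  finally show ?thesis .
qed

definition balanced :: "int \<times> int \<times> int \<Rightarrow> bool" where
  "balanced = (\<lambda>(a, b, y). a = 0 \<and> 4 dvd b \<and> 4 dvd y)"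

lemma balanced_uminus [simp]: "balanced (- v) \<longleftrightarrow> balanced v"
  by (auto simp: balanced_def split: prod.splits)

lemma elem_of_coords_balanced: "balanced v \<Longrightarrow> elem_of_coords r v = \<one>\<^bsub>Gamma r\<^esub>"
  by (auto simp: balanced_def elem_of_coords_def)

definition coords_mod4 :: "int \<times> int \<times> int \<Rightarrow> int \<times> int \<times> int" where
  "coords_mod4 = (\<lambda>(a, b, y). (a, b mod 4, y mod 4))"

lemma elem_of_coords_eqD:
  assumes "2 * \<bar>fst v\<bar> < int r" "2 * \<bar>fst v'\<bar> < int r"
    and "elem_of_coords r v = elem_of_coords r v'"
  shows "coords_mod4 v = coords_mod4 v'"
proof -
  obtain a b y a' b' y' where v: "v = (a, b, y)" and v': "v' = (a', b', y')"
    by (metis prod.exhaust)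
  have cong: "4 * int r dvd (a - a') + int r * (b - b')" "4 dvd y - y'"
    using assms(3) by (simp_all add: v v' elem_of_coords_def mod_eq_dvd_iff algebra_simps)
  then have "int r dvd a - a' + (b - b') * int r"
    by (metis dvd_mult_right mult.commute)
  then have "int r dvd a - a'"
    by simp
  moreover have "\<bar>a - a'\<bar> < int r"
    using assms(1,2) by (simp add: v v')
  ultimately have a: "a = a'"
    using dvd_imp_le_int[of "a - a'" "int r"] by fastforce
  with cong have "int r * 4 dvd int r * (b - b')"
    by (simp add: mult.commute)
  then have "4 dvd b - b'"
    using assms(1) by auto
  with a cong(2) show ?thesis
    by (simp add: v v' coords_mod4_def mod_eq_dvd_iff)
qed

definition low_arrays :: "(int \<times> int \<times> int) list list list" where
  "low_arrays =
    [[[(0, 0, 0), (0, 3, 1), (1, 1, 1), (-1, 1, 0), (1, 0, 2), (-1, 3, 0), (0, 1, 2), (0, 3, 2)],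
      [(1, 0, 0), (-1, 0, 3), (0, 0, 1), (0, 2, 1), (-1, 2, 2), (1, 3, 1), (1, 2, 3), (-1, 3, 1)],
      [(-1, 0, 0), (1, 1, 0), (-1, 3, 2), (1, 1, 3), (0, 2, 0), (0, 2, 3), (-1, 1, 3), (1, 2, 1)]],
     [[(0, 3, 3), (0, 1, 1), (1, 2, 2), (-1, 1, 1), (1, 0, 1), (-1, 0, 2), (0, 0, 3), (0, 1, 3)],
      [(1, 3, 2), (-1, 2, 1), (0, 0, 2), (0, 3, 0), (-1, 3, 3), (1, 2, 0), (1, 3, 3), (-1, 0, 1)],
      [(-1, 2, 3), (1, 1, 2), (-1, 2, 0), (1, 0, 3), (0, 1, 0), (0, 2, 2), (-1, 1, 2), (1, 3, 0)]]]"

lemma balanced_low_rows: "k < 2 \<Longrightarrow> i < 3 \<Longrightarrow> balanced (\<Sum>j<8. low_arrays ! k ! i ! j)"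
  by (auto simp: less_Suc_eq eval_nat_numeral low_arrays_def balanced_def)

lemma balanced_low_columns: "k < 2 \<Longrightarrow> j < 8 \<Longrightarrow> balanced (\<Sum>i<3. low_arrays ! k ! i ! j)"
  by (auto simp: less_Suc_eq eval_nat_numeral low_arrays_def balanced_def)

lemma abs_fst_low_arrays: "k < 2 \<Longrightarrow> i < 3 \<Longrightarrow> j < 8 \<Longrightarrow> \<bar>fst (low_arrays ! k ! i ! j)\<bar> \<le> 1"
  by (auto simp: less_Suc_eq eval_nat_numeral low_arrays_def)

lemma inj_on_low_arrays_mod4:
  "inj_on (\<lambda>(k, i, j). coords_mod4 (low_arrays ! k ! i ! j)) ({..<2} \<times> {..<3} \<times> {..<8})"
proof -
  let ?xs = "List.product [0..<2] (List.product [0..<3] [0..<8])"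
  have "distinct (map (\<lambda>(k, i, j). coords_mod4 (low_arrays ! k ! i ! j)) ?xs)"
    by (simp add: upt_conv_Cons low_arrays_def coords_mod4_def)
  moreover have "set ?xs = {..<2} \<times> {..<3} \<times> {..<8}"
    by (simp add: atLeast0LessThan)
  ultimately show ?thesis
    by (simp add: distinct_map)
qed

definition high_coords :: "int \<Rightarrow> nat \<Rightarrow> nat \<Rightarrow> int \<times> int \<times> int" where
  "high_coords p k j =
    (if j < 4 then (p, 2 * int k, int j) else (- p, 2 * int k + 1, int j - 4))"

lemma balanced_high_row: "balanced (\<Sum>j<8. high_coords p k j)"
proof -
  have "(\<Sum>j<8. high_coords p k j) = (0, 4 * (4 * int k + 1), 12)"
    by (simp add: eval_nat_numeral high_coords_def)
  then show ?thesis
    by (simp add: balanced_def)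
qed

lemma abs_fst_high_coords: "\<bar>fst (high_coords p k j)\<bar> = \<bar>p\<bar>"
  by (simp add: high_coords_def)

lemma inj_on_high_coords_mod4:
  assumes "p \<noteq> 0"
  shows "inj_on (\<lambda>(k, s, j). coords_mod4 (if s then high_coords p k j else - high_coords p k j))
    ({..<2} \<times> UNIV \<times> {..<8})"
proof -
  let ?xs = "List.product [0..<2] (List.product [True, False] [0..<8])"
  have "distinct (map (\<lambda>(k, s, j). coords_mod4 (if s then high_coords p k j else - high_coords p k j)) ?xs)"
    using assms by (simp add: upt_conv_Cons high_coords_def coords_mod4_def)
  moreover have "set ?xs = {..<2} \<times> UNIV \<times> {..<8}"
    by (auto simp: atLeast0LessThan)
  ultimately show ?thesis
    by (simp add: distinct_map)
qed

definition coords :: "nat \<Rightarrow> nat \<Rightarrow> nat \<Rightarrow> int \<times> int \<times> int" where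
  "coords k i j =
    (if i < 3 then low_arrays ! k ! i ! j
     else if odd i then high_coords (int ((i + 1) div 2)) k j
     else - high_coords (int ((i + 1) div 2)) k j)"

lemma coords_high:
  "3 \<le> i \<Longrightarrow> coords k i j =
    (if odd i then high_coords (int ((i + 1) div 2)) k j else - high_coords (int ((i + 1) div 2)) k j)"
  by (simp add: coords_def)

lemma abs_fst_coords_low: "k < 2 \<Longrightarrow> i < 3 \<Longrightarrow> j < 8 \<Longrightarrow> \<bar>fst (coords k i j)\<bar> \<le> 1"
  by (simp add: coords_def abs_fst_low_arrays)

lemma abs_fst_coords_high: "3 \<le> i \<Longrightarrow> \<bar>fst (coords k i j)\<bar> = int ((i + 1) div 2)"
  by (simp only: coords_high) (simp add: abs_fst_high_coords)

lemma balanced_coords_row: "k < 2 \<Longrightarrow> balanced (\<Sum>j<8. coords k i j)"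
  by (cases "i < 3"; cases "odd i")
    (simp_all add: coords_def balanced_low_rows balanced_high_row sum_negf)

lemma balanced_coords_column:
  assumes "k < 2" "j < 8" "odd r" "3 \<le> r"
  shows "balanced (\<Sum>i<r. coords k i j)"
proof -
  obtain q where "r = 2 * q + 1"
    using assms(3) by (rule oddE)
  with assms(4) have "r = 3 + 2 * (q - 1)"
    by arith
  then obtain m where r: "r = 3 + 2 * m"
    by blast
  have "coords k (3 + 2 * t) j + coords k (3 + 2 * t + 1) j = 0" for t
    by (simp add: coords_def)
  then have "(\<Sum>i<r. coords k i j) = (\<Sum>i<3. coords k i j)"
    unfolding r by (rule sum_lessThan_cancel_pairs)
  also have "\<dots> = (\<Sum>i<3. low_arrays ! k ! i ! j)"
    by (simp add: coords_def)
  finally show ?thesis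
    using balanced_low_columns assms(1,2) by simp
qed

lemma coords_small:
  assumes "k < 2" "i < r" "j < 8" "odd r" "3 \<le> r"
  shows "2 * \<bar>fst (coords k i j)\<bar> < int r"
proof (cases "i < 3")
  case True
  with assms abs_fst_coords_low show ?thesis
    by fastforce
next
  case False
  define p where "p = (i + 1) div 2"
  have "2 * p \<le> r"
    using assms(2) unfolding p_def by linarith
  moreover have "2 * p \<noteq> r"
    using assms(4) by (metis dvd_triv_left)
  moreover have "\<bar>fst (coords k i j)\<bar> = int p"
    using False by (simp add: abs_fst_coords_high p_def)
  ultimately show ?thesis
    by linarith
qed

lemma coords_mod4_eqD:
  assumes dom: "k < 2" "j < 8" "k' < 2" "j' < 8"
    and eq: "coords_mod4 (coords k i j) = coords_mod4 (coords k' i' j')"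
  shows "k = k' \<and> i = i' \<and> j = j'"
proof -
  have fst_eq: "fst (coords k i j) = fst (coords k' i' j')"
    using eq by (simp add: coords_mod4_def split: prod.splits)
  consider (low) "i < 3" "i' < 3" | (high) "3 \<le> i" "3 \<le> i'"
    | (low_high) "i < 3" "3 \<le> i'" | (high_low) "3 \<le> i" "i' < 3"
    by linarith
  then show ?thesis
  proof cases
    case low
    with eq have "coords_mod4 (low_arrays ! k ! i ! j) = coords_mod4 (low_arrays ! k' ! i' ! j')"
      by (simp add: coords_def)
    with low dom show ?thesis
      using inj_onD[OF inj_on_low_arrays_mod4, of "(k, i, j)" "(k', i', j')"] by simp
  next
    case high
    define p where "p = (i + 1) div 2"
    have p: "(i' + 1) div 2 = p"
      using fst_eq high abs_fst_coords_high[of i k j] abs_fst_coords_high[of i' k' j']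
      by (simp add: p_def)
    have "p \<noteq> 0"
      using high by (simp add: p_def)
    moreover have "coords_mod4 (if odd i then high_coords (int p) k j else - high_coords (int p) k j)
      = coords_mod4 (if odd i' then high_coords (int p) k' j' else - high_coords (int p) k' j')"
      using eq unfolding coords_high[OF high(1)] coords_high[OF high(2)] p_def[symmetric] p .
    ultimately have "k = k' \<and> odd i = odd i' \<and> j = j'"
      using inj_onD[OF inj_on_high_coords_mod4[of "int p"], of "(k, odd i, j)" "(k', odd i', j')"] dom
      by simp
    moreover have "i = i'" if "odd i = odd i'"
      using that p unfolding p_def by presburger
    ultimately show ?thesis
      by blast
  next
    case low_high
    with dom have "\<bar>fst (coords k i j)\<bar> \<le> 1" "\<bar>fst (coords k' i' j')\<bar> \<ge> 2"
      by (simp_all add: abs_fst_coords_low abs_fst_coords_high)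
    with fst_eq show ?thesis
      by simp
  next
    case high_low
    with dom have "\<bar>fst (coords k i j)\<bar> \<ge> 2" "\<bar>fst (coords k' i' j')\<bar> \<le> 1"
      by (simp_all add: abs_fst_coords_low abs_fst_coords_high)
    with fst_eq show ?thesis
      by simp
  qed
qed

lemma is_MRS_Gamma:
  assumes "3 \<le> r" "odd r"
  shows "is_MRS (Gamma r) r 8 2 (\<lambda>k i j. elem_of_coords r (coords k i j))
    \<one>\<^bsub>Gamma r\<^esub> \<one>\<^bsub>Gamma r\<^esub>"
proof -
  let ?D = "{..<2} \<times> {..<r} \<times> {..<8}" and ?A = "\<lambda>(k, i, j). elem_of_coords r (coords k i j)"
  have "(k, i, j) = (k', i', j')"
    if "k < 2" "i < r" "j < 8" "k' < 2" "i' < r" "j' < 8"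
      and "elem_of_coords r (coords k i j) = elem_of_coords r (coords k' i' j')" for k i j k' i' j'
  proof -
    have "coords_mod4 (coords k i j) = coords_mod4 (coords k' i' j')"
      using that by (intro elem_of_coords_eqD coords_small) (simp_all add: assms)
    with that(1,3,4,6) show ?thesis
      by (simp add: coords_mod4_eqD)
  qed
  then have inj: "inj_on ?A ?D"
    by (auto simp: inj_on_def)
  have carrier: "carrier (Gamma r) = {0..<4 * int r} \<times> {0..<4}"
    using assms by (simp add: carrier_integer_mod_group)
  then have card: "card (carrier (Gamma r)) = r * 8 * 2"
    by (simp add: card_cartesian_product nat_mult_distrib)
  have "?A ` ?D = carrier (Gamma r)"
  proof (rule card_subset_eq)
    show "?A ` ?D \<subseteq> carrier (Gamma r)"
      by (clarsimp simp add: elem_of_coords_in_carrier simp del: carrier_DirProd)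
    show "card (?A ` ?D) = card (carrier (Gamma r))"
      using card_image[OF inj] card by (simp add: card_cartesian_product)
  qed (unfold carrier, simp)
  with inj have "bij_betw ?A ?D (carrier (Gamma r))"
    by (simp add: bij_betw_def)
  with card carrier assms show ?thesis
    unfolding is_MRS_def
    by (simp add: finprod_elem_of_coords elem_of_coords_balanced
        balanced_coords_row balanced_coords_column)
qed

theorem lemma4p7:
  fixes G :: "('g, 'm) monoid_scheme" and r :: nat
  assumes "r \<ge> 3" and "odd r"
    and "comm_group G"
    and "G \<cong> integer_mod_group (4 * r) \<times>\<times> integer_mod_group 4"
  shows "\<exists>A. is_MRS G r 8 2 A \<one>\<^bsub>G\<^esub> \<one>\<^bsub>G\<^esub>"
proof -
  have "group G"
    using assms(3) by (simp add: comm_group_def)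
  then obtain h where h: "h \<in> iso (Gamma r) G"
    using group.iso_sym[OF _ assms(4)] by (auto simp: is_iso_def)
  have "h \<one>\<^bsub>Gamma r\<^esub> = \<one>\<^bsub>G\<^esub>"
    using hom_one[OF iso_imp_homomorphism[OF h] DirProd_group \<open>group G\<close>] by simp
  with is_MRS_iso[OF comm_group_Gamma assms(3) h is_MRS_Gamma[OF assms(1,2)]] show ?thesis
    by auto
qed

end
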